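(* Every CPS tensor $\mathcal{A}\in\mathbb{C}^{n\times n\times n\times n}$ can be written as \[ \mathcal{A}=\sum_{i=1}^R\alpha_i\big(p_i\otimes p_i\otimes\bar q_i\otimes\bar q_i+q_i\otimes q_i\otimes\bar p_i\otimes\bar p_i\big), \] with $\alpha_i\in\mathbb{R}$ and $p_i,q_i\in\mathbb{C}^n$ for $i=1,\dots,R$. If $\mathcal{A}$ has real entries, then the $p_i,q_i$ can be chosen in $\mathbb{R}^n$.
   Context: A tensor $\mathcal{A}\in\mathbb{C}^{n\times n\times n\times n}$ is conjugate partial-symmetric (CPS) if $\mathcal{A}_{ijkl}=\overline{\mathcal{A}_{klij}}$ and $\mathcal{A}_{ijkl}=\mathcal{A}_{jikl}=\mathcal{A}_{ijlk}$ for all indices. $(u\otimes v\otimes w\otimes z)_{ijkl}=u_iv_jw_kz_l$. *)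

theory Defs
  imports "HOL-Analysis.Analysis"
begin

text \<open>Fourth-order tensors in C^(n x n x n x n) are represented as functions
  nat => nat => nat => nat => complex, only the values at indices < n matter.
  Vectors in C^n are functions nat => complex (entries at indices < n).\<close>

type_synonym tensor4 = "nat \<Rightarrow> nat \<Rightarrow> nat \<Rightarrow> nat \<Rightarrow> complex"

definition CPS :: "nat \<Rightarrow> tensor4 \<Rightarrow> bool" where
  "CPS n A \<longleftrightarrow> (\<forall>i<n. \<forall>j<n. \<forall>k<n. \<forall>l<n.
      A i j k l = cnj (A k l i j) \<and> A i j k l = A j i k l \<and> A i j k l = A i j l k)"

definition outer4 :: "(nat \<Rightarrow> complex) \<Rightarrow> (nat \<Rightarrow> complex) \<Rightarrow> (nat \<Rightarrow> complex) \<Rightarrow> (nat \<Rightarrow> complex) \<Rightarrow> tensor4" where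
  "outer4 u v w z = (\<lambda>i j k l. u i * v j * w k * z l)"

definition cnjv :: "(nat \<Rightarrow> complex) \<Rightarrow> nat \<Rightarrow> complex" where
  "cnjv u = (\<lambda>i. cnj (u i))"

definition cps_decomp :: "nat \<Rightarrow> tensor4 \<Rightarrow> nat \<Rightarrow> (nat \<Rightarrow> real) \<Rightarrow> (nat \<Rightarrow> nat \<Rightarrow> complex) \<Rightarrow> (nat \<Rightarrow> nat \<Rightarrow> complex) \<Rightarrow> bool" where
  "cps_decomp n A R \<alpha> p q \<longleftrightarrow> (\<forall>i<n. \<forall>j<n. \<forall>k<n. \<forall>l<n.
      A i j k l = (\<Sum>r<R. complex_of_real (\<alpha> r) *
         (outer4 (p r) (p r) (cnjv (q r)) (cnjv (q r)) i j k l
          + outer4 (q r) (q r) (cnjv (p r)) (cnjv (p r)) i j k l)))"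

end

theory Submission
  imports Defs
begin

text \<open>Write u o w for the symmetric matrix u w^T + w u^T and e_i for the unit vectors. The CPS
  symmetries give A = sum_ijkl (A_ijkl/8) (e_i o e_j) x conj(e_k o e_l) + conj(A_ijkl/8) (e_k o e_l) x conj(e_i o e_j).
  Once A_ijkl = c L^2 with c real, polarization, sum_(s = +-1) s (u + s w)(u + s w)^T = 2 (u o w),
  turns each summand into four terms of the required shape with p = L (e_i + s e_j) and q = e_k + t e_l.
  In general take L = sqrt A_ijkl; for real A take c = A_ijkl and L = 1, which keeps all vectors real.\<close>

definition cps_decomposable :: "nat \<Rightarrow> ((nat \<Rightarrow> complex) \<Rightarrow> bool) \<Rightarrow> tensor4 \<Rightarrow> bool" where
  "cps_decomposable n V A \<longleftrightarrow>
     (\<exists>R \<alpha> p q. cps_decomp n A R \<alpha> p q \<and> (\<forall>r<R. V (p r) \<and> V (q r)))"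

lemma cps_decomposable_cong:
  assumes "\<And>i j k l. i < n \<Longrightarrow> j < n \<Longrightarrow> k < n \<Longrightarrow> l < n \<Longrightarrow> A i j k l = B i j k l"
    and "cps_decomposable n V A"
  shows "cps_decomposable n V B"
proof -
  obtain R \<alpha> p q where "cps_decomp n A R \<alpha> p q" and "\<forall>r<R. V (p r) \<and> V (q r)"
    using assms(2) unfolding cps_decomposable_def by blast
  moreover have "cps_decomp n B R \<alpha> p q \<longleftrightarrow> cps_decomp n A R \<alpha> p q"
    unfolding cps_decomp_def using assms(1) by simp
  ultimately show ?thesis
    unfolding cps_decomposable_def by blast
qed

lemma cps_decomposable_zero: "cps_decomposable n V (\<lambda>i j k l. 0)"
  unfolding cps_decomposable_def cps_decomp_def by (rule exI[of _ 0]) simp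

lemma cps_decomposable_rank_one:
  assumes "V p" and "V q"
  shows "cps_decomposable n V (\<lambda>i j k l. complex_of_real a *
           (outer4 p p (cnjv q) (cnjv q) i j k l + outer4 q q (cnjv p) (cnjv p) i j k l))"
  unfolding cps_decomposable_def cps_decomp_def
  using assms by (intro exI[of _ 1] exI[of _ "\<lambda>_. a"] exI[of _ "\<lambda>_. p"] exI[of _ "\<lambda>_. q"]) simp

lemma sum_lessThan_add_nat:
  fixes g :: "nat \<Rightarrow> 'a::comm_monoid_add"
  shows "(\<Sum>r<m + m'. g r) = (\<Sum>r<m. g r) + (\<Sum>r<m'. g (r + m))"
proof -
  have "(\<Sum>r<m + m'. g r) = (\<Sum>r\<in>{0..<m}. g r) + (\<Sum>r\<in>{m..<m + m'}. g r)"
    by (simp add: sum.atLeastLessThan_concat atLeast0LessThan[symmetric])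
  also have "(\<Sum>r\<in>{m..<m + m'}. g r) = (\<Sum>r<m'. g (r + m))"
    using sum.shift_bounds_nat_ivl[of g 0 m m'] by (simp add: atLeast0LessThan add.commute)
  finally show ?thesis by (simp add: atLeast0LessThan)
qed

lemma cps_decomposable_add:
  assumes "cps_decomposable n V A" and "cps_decomposable n V B"
  shows "cps_decomposable n V (\<lambda>i j k l. A i j k l + B i j k l)"
proof -
  obtain R \<alpha> p q where A: "cps_decomp n A R \<alpha> p q" and VA: "\<forall>r<R. V (p r) \<and> V (q r)"
    using assms(1) unfolding cps_decomposable_def by blast
  obtain R' \<beta> p' q' where B: "cps_decomp n B R' \<beta> p' q'" and VB: "\<forall>r<R'. V (p' r) \<and> V (q' r)"
    using assms(2) unfolding cps_decomposable_def by blast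
  define \<alpha>' where "\<alpha>' r = (if r < R then \<alpha> r else \<beta> (r - R))" for r
  define p'' where "p'' r = (if r < R then p r else p' (r - R))" for r
  define q'' where "q'' r = (if r < R then q r else q' (r - R))" for r
  have "cps_decomp n (\<lambda>i j k l. A i j k l + B i j k l) (R + R') \<alpha>' p'' q''"
    using A B unfolding cps_decomp_def by (simp add: sum_lessThan_add_nat \<alpha>'_def p''_def q''_def)
  moreover have "\<forall>r<R + R'. V (p'' r) \<and> V (q'' r)"
    using VA VB by (auto simp: p''_def q''_def)
  ultimately show ?thesis
    unfolding cps_decomposable_def by blast
qed

lemma cps_decomposable_sum:
  assumes "finite X" and "\<And>x. x \<in> X \<Longrightarrow> cps_decomposable n V (T x)"
  shows "cps_decomposable n V (\<lambda>i j k l. \<Sum>x\<in>X. T x i j k l)"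
  using assms by (induction X rule: finite_induct)
    (simp_all add: cps_decomposable_zero cps_decomposable_add)

definition sym_prod :: "(nat \<Rightarrow> complex) \<Rightarrow> (nat \<Rightarrow> complex) \<Rightarrow> nat \<Rightarrow> nat \<Rightarrow> complex" where
  "sym_prod u w i j = u i * w j + w i * u j"

definition cps_elem ::
    "complex \<Rightarrow> (nat \<Rightarrow> complex) \<Rightarrow> (nat \<Rightarrow> complex) \<Rightarrow> (nat \<Rightarrow> complex) \<Rightarrow> (nat \<Rightarrow> complex) \<Rightarrow> tensor4"
  where
  "cps_elem z u w x y = (\<lambda>i j k l. z * sym_prod u w i j * cnj (sym_prod x y k l)
                                  + cnj z * sym_prod x y i j * cnj (sym_prod u w k l))"

lemma cps_decomposable_cps_elem:
  assumes z: "z = complex_of_real c * L\<^sup>2"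
    and VP: "\<And>s. s \<in> {1, -1} \<Longrightarrow> V (\<lambda>m. L * (u m + of_real s * w m))"
    and VQ: "\<And>t. t \<in> {1, -1} \<Longrightarrow> V (\<lambda>m. x m + of_real t * y m)"
  shows "cps_decomposable n V (cps_elem z u w x y)"
proof -
  define P where "P s = (\<lambda>m. L * (u m + of_real s * w m))" for s
  define Q where "Q t = (\<lambda>m. x m + of_real t * y m)" for t
  have "cps_decomposable n V (\<lambda>i j k l. \<Sum>s\<in>{1, -1}. \<Sum>t\<in>{1, -1}. complex_of_real (c * s * t / 4) *
          (outer4 (P s) (P s) (cnjv (Q t)) (cnjv (Q t)) i j k l
           + outer4 (Q t) (Q t) (cnjv (P s)) (cnjv (P s)) i j k l))"
    using VP VQ by (intro cps_decomposable_sum cps_decomposable_rank_one) (auto simp: P_def Q_def)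
  then show ?thesis
    by (rule cps_decomposable_cong[rotated])
      (simp add: z P_def Q_def cps_elem_def sym_prod_def outer4_def cnjv_def algebra_simps power2_eq_square)
qed

definition unit_vec :: "nat \<Rightarrow> nat \<Rightarrow> complex" where
  "unit_vec a m = (if m = a then 1 else 0)"

lemma cnj_sym_prod_unit_vec [simp]:
  "cnj (sym_prod (unit_vec i) (unit_vec j) a b) = sym_prod (unit_vec i) (unit_vec j) a b"
  by (simp add: sym_prod_def unit_vec_def)

lemma sum2_sym_prod_unit_vec:
  assumes "a < n" and "b < n"
  shows "(\<Sum>i<n. \<Sum>j<n. f i j * sym_prod (unit_vec i) (unit_vec j) a b) = f a b + f b a"
proof -
  have "(\<Sum>j<n. f i j * sym_prod (unit_vec i) (unit_vec j) a b)
      = (if i = a then f a b else 0) + (if i = b then f b a else 0)" for i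
  proof -
    have "f i j * sym_prod (unit_vec i) (unit_vec j) a b
        = (if j = b then if i = a then f a b else 0 else 0) + (if j = a then if i = b then f b a else 0 else 0)"
      for j
      by (simp add: sym_prod_def unit_vec_def)
    then show ?thesis
      using assms by (simp add: sum.distrib sum.delta)
  qed
  then show ?thesis
    using assms by (simp add: sum.distrib sum.delta)
qed

lemma sum4_sym_prod_unit_vec:
  assumes "a < n" and "b < n" and "c < n" and "d < n"
  shows "(\<Sum>i<n. \<Sum>j<n. \<Sum>k<n. \<Sum>l<n. f i j k l * sym_prod (unit_vec i) (unit_vec j) a b
             * sym_prod (unit_vec k) (unit_vec l) c d)
       = f a b c d + f a b d c + f b a c d + f b a d c"
proof -
  have "(\<Sum>k<n. \<Sum>l<n. f i j k l * sym_prod (unit_vec i) (unit_vec j) a b * sym_prod (unit_vec k) (unit_vec l) c d)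
      = (f i j c d + f i j d c) * sym_prod (unit_vec i) (unit_vec j) a b" for i j
    using sum2_sym_prod_unit_vec[OF assms(3,4), of "\<lambda>k l. f i j k l * sym_prod (unit_vec i) (unit_vec j) a b"]
    by (simp add: algebra_simps)
  then show ?thesis
    using sum2_sym_prod_unit_vec[OF assms(1,2), of "\<lambda>i j. f i j c d + f i j d c"] by simp
qed

lemma CPS_eq_sum_cps_elem:
  assumes "CPS n A" and "i0 < n" and "j0 < n" and "k0 < n" and "l0 < n"
  shows "A i0 j0 k0 l0 = (\<Sum>i<n. \<Sum>j<n. \<Sum>k<n. \<Sum>l<n.
      cps_elem (A i j k l / 8) (unit_vec i) (unit_vec j) (unit_vec k) (unit_vec l) i0 j0 k0 l0)"
    (is "_ = ?rhs")
proof -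
  have sym: "A i0 j0 l0 k0 = A i0 j0 k0 l0" "A j0 i0 k0 l0 = A i0 j0 k0 l0" "A j0 i0 l0 k0 = A i0 j0 k0 l0"
    using assms unfolding CPS_def by metis+
  have herm: "cnj (A k0 l0 i0 j0) = A i0 j0 k0 l0" "cnj (A k0 l0 j0 i0) = A i0 j0 k0 l0"
      "cnj (A l0 k0 i0 j0) = A i0 j0 k0 l0" "cnj (A l0 k0 j0 i0) = A i0 j0 k0 l0"
    using assms unfolding CPS_def by metis+
  have "?rhs = (\<Sum>i<n. \<Sum>j<n. \<Sum>k<n. \<Sum>l<n. A i j k l / 8 * sym_prod (unit_vec i) (unit_vec j) i0 j0
                  * sym_prod (unit_vec k) (unit_vec l) k0 l0)
             + (\<Sum>i<n. \<Sum>j<n. \<Sum>k<n. \<Sum>l<n. cnj (A i j k l) / 8 * sym_prod (unit_vec i) (unit_vec j) k0 l0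
                  * sym_prod (unit_vec k) (unit_vec l) i0 j0)"
    by (simp add: cps_elem_def sum.distrib algebra_simps)
  also have "\<dots> = (A i0 j0 k0 l0 + A i0 j0 l0 k0 + A j0 i0 k0 l0 + A j0 i0 l0 k0) / 8
      + (cnj (A k0 l0 i0 j0) + cnj (A k0 l0 j0 i0) + cnj (A l0 k0 i0 j0) + cnj (A l0 k0 j0 i0)) / 8"
    using sum4_sym_prod_unit_vec[OF assms(2-5), of "\<lambda>i j k l. A i j k l / 8"]
      sum4_sym_prod_unit_vec[OF assms(4,5,2,3), of "\<lambda>i j k l. cnj (A i j k l) / 8"]
    by (simp add: add_divide_distrib)
  also have "\<dots> = A i0 j0 k0 l0"
    unfolding sym herm by simp
  finally show ?thesis ..
qed

lemma CPS_imp_cps_decomposable: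
  assumes "CPS n A"
    and real_vec: "\<And>v. (\<forall>m. v m \<in> \<real>) \<Longrightarrow> V v"
    and factor: "\<And>i j k l. i < n \<Longrightarrow> j < n \<Longrightarrow> k < n \<Longrightarrow> l < n \<Longrightarrow>
       \<exists>c L. A i j k l = complex_of_real c * L\<^sup>2 \<and> (\<forall>v. (\<forall>m. v m \<in> \<real>) \<longrightarrow> V (\<lambda>m. L * v m))"
  shows "cps_decomposable n V A"
proof -
  have "cps_decomposable n V (\<lambda>i0 j0 k0 l0. \<Sum>i<n. \<Sum>j<n. \<Sum>k<n. \<Sum>l<n.
          cps_elem (A i j k l / 8) (unit_vec i) (unit_vec j) (unit_vec k) (unit_vec l) i0 j0 k0 l0)"
  proof (intro cps_decomposable_sum finite_lessThan)
    fix i j k l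
    assume "i \<in> {..<n}" "j \<in> {..<n}" "k \<in> {..<n}" "l \<in> {..<n}"
    then obtain c L where "A i j k l = complex_of_real c * L\<^sup>2"
      and VL: "\<forall>v. (\<forall>m. v m \<in> \<real>) \<longrightarrow> V (\<lambda>m. L * v m)"
      using factor by blast
    then have "A i j k l / 8 = complex_of_real (c / 8) * L\<^sup>2"
      by simp
    then show "cps_decomposable n V (cps_elem (A i j k l / 8) (unit_vec i) (unit_vec j) (unit_vec k) (unit_vec l))"
      by (rule cps_decomposable_cps_elem) (use VL real_vec in \<open>auto simp: unit_vec_def\<close>)
  qed
  then show ?thesis
    by (rule cps_decomposable_cong[rotated]) (simp add: CPS_eq_sum_cps_elem[OF assms(1)])
qed

theorem corollary4p3:
  fixes n :: nat and A :: tensor4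
  assumes "CPS n A"
  shows "(\<exists>R \<alpha> p q. cps_decomp n A R \<alpha> p q)
       \<and> ((\<forall>i<n. \<forall>j<n. \<forall>k<n. \<forall>l<n. A i j k l \<in> \<real>) \<longrightarrow>
            (\<exists>R \<alpha> p q. cps_decomp n A R \<alpha> p q \<and>
               (\<forall>r<R. \<forall>i<n. p r i \<in> \<real> \<and> q r i \<in> \<real>)))"
proof (intro conjI impI)
  have "\<exists>c L. A i j k l = complex_of_real c * L\<^sup>2 \<and> (\<forall>v. (\<forall>m. v m \<in> \<real>) \<longrightarrow> True)" for i j k l
    by (intro exI[of _ 1] exI[of _ "csqrt (A i j k l)"]) simp
  then have "cps_decomposable n (\<lambda>_. True) A"
    using assms by (intro CPS_imp_cps_decomposable) simp_all
  then show "\<exists>R \<alpha> p q. cps_decomp n A R \<alpha> p q"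
    unfolding cps_decomposable_def by blast
next
  assume real: "\<forall>i<n. \<forall>j<n. \<forall>k<n. \<forall>l<n. A i j k l \<in> \<real>"
  have "\<exists>c L. A i j k l = complex_of_real c * L\<^sup>2 \<and>
          (\<forall>v. (\<forall>m. v m \<in> \<real>) \<longrightarrow> (\<forall>m<n. L * v m \<in> \<real>))"
    if "i < n" "j < n" "k < n" "l < n" for i j k l
    using real that by (intro exI[of _ "Re (A i j k l)"] exI[of _ 1]) simp
  then have "cps_decomposable n (\<lambda>v. \<forall>i<n. v i \<in> \<real>) A"
    using assms by (intro CPS_imp_cps_decomposable) simp_all
  then show "\<exists>R \<alpha> p q. cps_decomp n A R \<alpha> p q \<and> (\<forall>r<R. \<forall>i<n. p r i \<in> \<real> \<and> q r i \<in> \<real>)"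
    unfolding cps_decomposable_def by blast
qed

end
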